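(* For $A\in\mathcal{M}_s(\mathbb{N}^d)$ the following are equivalent: (i) $A$ has a convolutional inverse; (ii) $A$ is row equivalent to the identity sequence $\mathbbm{I}_s$; (iii) $A$ can be written as the convolution of a finite sequence of elementary matrix sequences.
   Context: $\mathcal{M}_s(\mathbb{N}^d)$ is the set of functions $\mathbb{N}^d\to\mathbb{R}^{s\times s}$, viewed equivalently as $s\times s$ matrices of real sequences on $\mathbb{N}^d$. Convolution: $[A*B](k)=\sum_{l+l'=k,\,l,l'\in\mathbb{N}^d}A(l)B(l')$. $\mathbbm{I}_s(0_d)=I_s$ and $\mathbbm{I}_s(k)=O_s$ for $k\ne0_d$; $A$ has a convolutional inverse if $A*B=B*A=\mathbbm{I}_s$ for some $B$. A real sequence $\alpha$ is convolutionally invertible if it has a convolutional inverse for $s=1$. Elementary row operations: (1) swapping two rows; (2) replacing a row by its entrywise convolution with a convolutionally invertible real sequence; (3) replacing row $j$ by row $j$ plus row $i$ ($i\ne j$) convolved entrywise with a convolutionally invertible real sequence. An elementary matrix sequence is one obtained by a single elementary row operation from $\mathbbm{I}_s$. $A$ and $B$ are row equivalent if one can be obtained from the other by a finite sequence of elementary row operations. *)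

theory Defs
  imports "HOL-Analysis.Analysis"
begin

text \<open>Index set N^d is rendered as nat^'d (d = CARD('d)); s x s real matrices as real^'s^'s.
  A matrix sequence is a function nat^'d => real^'s^'s.\<close>

type_synonym ('d, 's) mseq = "nat^'d \<Rightarrow> real^'s^'s"
type_synonym 'd rseq = "nat^'d \<Rightarrow> real"

definition mconv :: "('d::finite, 's::finite) mseq \<Rightarrow> ('d, 's) mseq \<Rightarrow> ('d, 's) mseq" where
  "mconv A B = (\<lambda>k. \<Sum>(l, l') \<in> {(l, l'). l + l' = k}. A l ** B l')"

definition sconv :: "'d::finite rseq \<Rightarrow> 'd rseq \<Rightarrow> 'd rseq" where
  "sconv a b = (\<lambda>k. \<Sum>(l, l') \<in> {(l, l'). l + l' = k}. a l * b l')"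

definition mid :: "('d::finite, 's::finite) mseq" where
  "mid = (\<lambda>k. if k = 0 then mat 1 else 0)"

definition sid :: "'d::finite rseq" where
  "sid = (\<lambda>k. if k = 0 then 1 else 0)"

definition conv_invertible :: "('d::finite, 's::finite) mseq \<Rightarrow> bool" where
  "conv_invertible A \<longleftrightarrow> (\<exists>B. mconv A B = mid \<and> mconv B A = mid)"

definition sconv_invertible :: "'d::finite rseq \<Rightarrow> bool" where
  "sconv_invertible a \<longleftrightarrow> (\<exists>b. sconv a b = sid \<and> sconv b a = sid)"

definition row_conv :: "'d::finite rseq \<Rightarrow> ('d, 's::finite) mseq \<Rightarrow> 's \<Rightarrow> nat^'d \<Rightarrow> real^'s" where
  "row_conv a A i = (\<lambda>k. \<chi> j. \<Sum>(l, l') \<in> {(l, l'). l + l' = k}. a l * (A l' $ i $ j))"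

definition elem_row_op :: "('d::finite, 's::finite) mseq \<Rightarrow> ('d, 's) mseq \<Rightarrow> bool" where
  "elem_row_op A B \<longleftrightarrow>
     (\<exists>i j. i \<noteq> j \<and> B = (\<lambda>k. \<chi> r. if r = i then A k $ j else if r = j then A k $ i else A k $ r))
   \<or> (\<exists>i a. sconv_invertible a \<and> B = (\<lambda>k. \<chi> r. if r = i then row_conv a A i k else A k $ r))
   \<or> (\<exists>i j a. i \<noteq> j \<and> sconv_invertible a \<and>
        B = (\<lambda>k. \<chi> r. if r = j then A k $ j + row_conv a A i k else A k $ r))"

definition elementary_mseq :: "('d::finite, 's::finite) mseq \<Rightarrow> bool" where
  "elementary_mseq E \<longleftrightarrow> elem_row_op mid E"

definition row_equivalent :: "('d::finite, 's::finite) mseq \<Rightarrow> ('d, 's) mseq \<Rightarrow> bool" where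
  "row_equivalent A B \<longleftrightarrow> elem_row_op\<^sup>*\<^sup>* A B \<or> elem_row_op\<^sup>*\<^sup>* B A"

end

theory Submission
  imports Defs
begin

text \<open>Convolution makes matrix sequences a monoid in which invertibility is visible at
  degree 0: \<open>A * B = I\<close> forces \<open>A(0) B(0) = I\<close>, so an invertible \<open>A\<close> has
  \<open>det A(0) \<noteq> 0\<close>, and a scalar sequence with \<open>a(0) \<noteq> 0\<close> can be inverted degree by degree.
  Every elementary row operation is left convolution with the elementary sequence it
  produces from the identity, and it can be undone by another one; this gives
  (ii) \<open>\<Longleftrightarrow>\<close> (iii) and (iii) \<open>\<Longrightarrow>\<close> (i). For (i) \<open>\<Longrightarrow>\<close> (ii), run Gauss-Jordan
  elimination on \<open>A\<close>, choosing pivots in the invertible matrix \<open>A(0)\<close>: a pivot entry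
  is a sequence with nonzero constant term, hence invertible, so its row can be scaled
  to make the pivot \<open>1\<close>, and the rest of the column is then cleared by row additions.\<close>

section \<open>Antidiagonals of \<open>\<nat>\<^sup>d\<close>\<close>

definition antidiag :: "nat^'d::finite \<Rightarrow> ((nat^'d) \<times> (nat^'d)) set" where
  "antidiag k = {(l, l'). l + l' = k}"

lemma mem_antidiag [simp]: "(l, l') \<in> antidiag k \<longleftrightarrow> l + l' = k"
  by (simp add: antidiag_def)

lemma sconv_antidiag: "sconv a b k = (\<Sum>(l, l')\<in>antidiag k. a l * b l')"
  by (simp add: sconv_def antidiag_def)

lemma mconv_antidiag: "mconv A B k = (\<Sum>(l, l')\<in>antidiag k. A l ** B l')"
  by (simp add: mconv_def antidiag_def)

lemma row_conv_antidiag: "row_conv a X i k = (\<chi> j. \<Sum>(l, l')\<in>antidiag k. a l * X l' $ i $ j)"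
  by (simp add: row_conv_def antidiag_def)

lemma finite_atMost_vec: "finite {..k :: nat^'d::finite}"
proof -
  have "{..k} \<subseteq> vec_lambda ` (\<Pi>\<^sub>E i\<in>UNIV. {..k $ i})"
  proof
    fix l assume "l \<in> {..k}"
    then have "vec_nth l \<in> (\<Pi>\<^sub>E i\<in>UNIV. {..k $ i})" by (simp add: less_eq_vec_def PiE_iff)
    then show "l \<in> vec_lambda ` (\<Pi>\<^sub>E i\<in>UNIV. {..k $ i})" by (rule rev_image_eqI) simp
  qed
  then show ?thesis by (rule finite_subset) (simp add: finite_PiE)
qed

lemma finite_antidiag: "finite (antidiag k)"
  by (rule finite_subset[of _ "{..k} \<times> {..k}"]) (auto simp: antidiag_def less_eq_vec_def finite_atMost_vec)

lemma antidiag_0: "antidiag (0::nat^'d::finite) = {(0, 0)}"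
  by (auto simp: antidiag_def vec_eq_iff)

lemma sum_antidiag_swap: "(\<Sum>(l, l')\<in>antidiag k. f l l') = (\<Sum>(l, l')\<in>antidiag k. f l' l)"
  by (rule sum.reindex_bij_witness[where i = prod.swap and j = prod.swap]) (auto simp: add.commute)

lemma sum_antidiag_assoc:
  fixes g :: "nat^'d::finite \<Rightarrow> nat^'d \<Rightarrow> nat^'d \<Rightarrow> 'a::comm_monoid_add"
  shows "(\<Sum>(l, l')\<in>antidiag k. \<Sum>(m, m')\<in>antidiag l. g m m' l')
       = (\<Sum>(l, l')\<in>antidiag k. \<Sum>(m, m')\<in>antidiag l'. g l m m')"
proof -
  have "(\<Sum>(l, l')\<in>antidiag k. \<Sum>(m, m')\<in>antidiag l. g m m' l')
      = (\<Sum>(p, q)\<in>Sigma (antidiag k) (\<lambda>p. antidiag (fst p)). g (fst q) (snd q) (snd p))"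
    by (subst sum.Sigma[symmetric]) (simp_all add: finite_antidiag split_def)
  also have "\<dots> = (\<Sum>(p, q)\<in>Sigma (antidiag k) (\<lambda>p. antidiag (snd p)). g (fst p) (fst q) (snd q))"
    by (rule sum.reindex_bij_witness[where i = "\<lambda>(p, q). ((fst p + fst q, snd q), (fst p, fst q))"
          and j = "\<lambda>(p, q). ((fst q, snd q + snd p), (snd q, snd p))"])
       (auto simp: add.assoc)
  also have "\<dots> = (\<Sum>(l, l')\<in>antidiag k. \<Sum>(m, m')\<in>antidiag l'. g l m m')"
    by (subst sum.Sigma[symmetric]) (simp_all add: finite_antidiag split_def)
  finally show ?thesis .
qed

lemma sum_antidiag_unit_left:
  "(\<Sum>(l, l')\<in>antidiag (k::nat^'d::finite). if l = 0 then f l' else 0) = f k"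
proof -
  have "(\<Sum>(l, l')\<in>antidiag k. if l = 0 then f l' else 0) = (\<Sum>p\<in>antidiag k. if p = (0, k) then f k else 0)"
    by (rule sum.cong) (auto split: if_split_asm)
  then show ?thesis by (simp add: finite_antidiag)
qed

section \<open>Invertible scalar sequences\<close>

lemma sconv_commute: "sconv a b = sconv b a"
  unfolding sconv_antidiag by (rule ext, subst sum_antidiag_swap) (simp add: mult.commute)

lemma sconv_0: "sconv a b 0 = a 0 * b 0"
  by (simp add: sconv_antidiag antidiag_0)

lemma sconv_sid_left [simp]: "sconv sid a = a"
proof
  fix k
  have "sconv sid a k = (\<Sum>(l, l')\<in>antidiag k. if l = 0 then a l' else 0)"
    unfolding sconv_antidiag sid_def by (rule sum.cong) auto
  then show "sconv sid a k = a k" by (simp add: sum_antidiag_unit_left)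
qed

lemma sconv_sid_right [simp]: "sconv a sid = a"
  using sconv_sid_left sconv_commute by metis

definition total_degree :: "nat^'d::finite \<Rightarrow> nat" where
  "total_degree k = (\<Sum>i\<in>UNIV. k $ i)"

lemma total_degree_add: "total_degree (k + l) = total_degree k + total_degree l"
  by (simp add: total_degree_def sum.distrib)

lemma total_degree_0 [simp]: "total_degree 0 = 0"
  by (simp add: total_degree_def)

lemma total_degree_pos: "k \<noteq> 0 \<Longrightarrow> total_degree k > 0"
  by (auto simp: total_degree_def vec_eq_iff intro!: sum_pos2)

text \<open>The coefficient of degree \<open>n\<close> is chosen so that \<open>sconv a b\<close> vanishes at degree \<open>n\<close>;
  since \<open>l\<close> has positive degree in \<open>antidiag k - {(0, k)}\<close>, only coefficients of lower degree
  enter.\<close>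

primrec sinv_upto :: "'d::finite rseq \<Rightarrow> nat \<Rightarrow> 'd rseq" where
  "sinv_upto a 0 = (\<lambda>k. if k = 0 then 1 / a 0 else 0)"
| "sinv_upto a (Suc n) = (\<lambda>k. if total_degree k = Suc n
      then - (\<Sum>(l, l')\<in>antidiag k - {(0, k)}. a l * sinv_upto a n l') / a 0
      else sinv_upto a n k)"

definition sinv :: "'d::finite rseq \<Rightarrow> 'd rseq" where
  "sinv a k = sinv_upto a (total_degree k) k"

lemma sinv_upto_eq_sinv: "total_degree k \<le> n \<Longrightarrow> sinv_upto a n k = sinv a k"
  by (induction n) (auto simp: sinv_def le_Suc_eq)

lemma sinv_recurrence:
  assumes "k \<noteq> 0"
  shows "sinv a k = - (\<Sum>(l, l')\<in>antidiag k - {(0, k)}. a l * sinv a l') / a 0"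
proof -
  obtain n where n: "total_degree k = Suc n"
    using assms total_degree_pos gr0_implies_Suc by blast
  have "sinv a k = - (\<Sum>(l, l')\<in>antidiag k - {(0, k)}. a l * sinv_upto a n l') / a 0"
    using n by (simp add: sinv_def)
  also have "\<dots> = - (\<Sum>(l, l')\<in>antidiag k - {(0, k)}. a l * sinv a l') / a 0"
  proof (intro arg_cong[where f = "\<lambda>x. - x / a 0"] sum.cong refl)
    fix p assume "p \<in> antidiag k - {(0, k)}"
    then obtain l l' where p: "p = (l, l')" "l + l' = k" "l \<noteq> 0" by (cases p) auto
    then have "total_degree l' \<le> n"
      using n total_degree_pos[of l] total_degree_add[of l l'] by auto
    then show "(case p of (l, l') \<Rightarrow> a l * sinv_upto a n l') = (case p of (l, l') \<Rightarrow> a l * sinv a l')"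
      using p by (simp add: sinv_upto_eq_sinv)
  qed
  finally show ?thesis .
qed

lemma sconv_sinv:
  assumes "a 0 \<noteq> 0"
  shows "sconv a (sinv a) = sid"
proof
  fix k
  show "sconv a (sinv a) k = sid k"
  proof (cases "k = 0")
    case True
    then show ?thesis using assms by (simp add: sconv_0 sid_def sinv_def)
  next
    case False
    have "sconv a (sinv a) k = a 0 * sinv a k + (\<Sum>(l, l')\<in>antidiag k - {(0, k)}. a l * sinv a l')"
      unfolding sconv_antidiag by (subst sum.remove[OF finite_antidiag, of "(0, k)"]) auto
    then show ?thesis
      using assms False by (simp add: sinv_recurrence sid_def)
  qed
qed

lemma sconv_invertible_iff: "sconv_invertible a \<longleftrightarrow> a 0 \<noteq> 0"
proof
  assume "sconv_invertible a"
  then obtain b where "sconv a b = sid" unfolding sconv_invertible_def by blast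
  then have "a 0 * b 0 = 1" by (metis sconv_0 sid_def)
  then show "a 0 \<noteq> 0" by auto
next
  assume "a 0 \<noteq> 0"
  then show "sconv_invertible a"
    unfolding sconv_invertible_def using sconv_sinv sconv_commute by metis
qed

lemma sconv_eq_sid_imp_invertible: "sconv b a = sid \<Longrightarrow> sconv_invertible b"
  by (metis sconv_0 sid_def sconv_invertible_iff mult_zero_left zero_neq_one)

section \<open>The convolution monoid of matrix sequences\<close>

lemma mconv_0: "mconv A B 0 = A 0 ** B 0"
  by (simp add: mconv_antidiag antidiag_0)

lemma sum_matrix_mult_left: "(\<Sum>x\<in>S. f x) ** (C::'a::comm_ring_1^'n::finite^'m::finite) = (\<Sum>x\<in>S. f x ** C)"
  by (simp add: matrix_matrix_mult_def vec_eq_iff sum_distrib_right) (subst sum.swap, simp)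

lemma sum_matrix_mult_right: "(C::'a::comm_ring_1^'n::finite^'m::finite) ** (\<Sum>x\<in>S. f x) = (\<Sum>x\<in>S. C ** f x)"
  by (simp add: matrix_matrix_mult_def vec_eq_iff sum_distrib_left) (subst sum.swap, simp)

lemma mconv_assoc: "mconv (mconv A B) C = mconv A (mconv B C)"
proof
  fix k
  have "mconv (mconv A B) C k = (\<Sum>(l, l')\<in>antidiag k. \<Sum>(m, m')\<in>antidiag l. (A m ** B m') ** C l')"
    unfolding mconv_antidiag by (simp add: sum_matrix_mult_left case_prod_beta)
  also have "\<dots> = (\<Sum>(l, l')\<in>antidiag k. \<Sum>(m, m')\<in>antidiag l'. A l ** (B m ** C m'))"
    by (subst sum_antidiag_assoc) (simp add: matrix_mul_assoc)
  also have "\<dots> = mconv A (mconv B C) k"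
    unfolding mconv_antidiag by (simp add: sum_matrix_mult_right case_prod_beta)
  finally show "mconv (mconv A B) C k = mconv A (mconv B C) k" .
qed

lemma mconv_mid_left [simp]: "mconv mid A = A"
proof
  fix k
  have "mconv mid A k = (\<Sum>(l, l')\<in>antidiag k. if l = 0 then A l' else 0)"
    unfolding mconv_antidiag mid_def by (rule sum.cong) auto
  then show "mconv mid A k = A k" by (simp add: sum_antidiag_unit_left)
qed

lemma mconv_mid_right [simp]: "mconv A mid = A"
proof
  fix k
  have "mconv A mid k = (\<Sum>(l, l')\<in>antidiag k. if l = 0 then A l' else 0)"
    unfolding mconv_antidiag mid_def by (subst sum_antidiag_swap) (rule sum.cong, auto)
  then show "mconv A mid k = A k" by (simp add: sum_antidiag_unit_left)
qed

lemma conv_invertible_mid: "conv_invertible mid"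
  unfolding conv_invertible_def by auto

lemma conv_invertible_mconv:
  assumes "conv_invertible A" "conv_invertible B"
  shows "conv_invertible (mconv A B)"
proof -
  obtain A' where "mconv A A' = mid" "mconv A' A = mid"
    using assms(1) unfolding conv_invertible_def by blast
  moreover obtain B' where "mconv B B' = mid" "mconv B' B = mid"
    using assms(2) unfolding conv_invertible_def by blast
  ultimately have "mconv (mconv A B) (mconv B' A') = mid" "mconv (mconv B' A') (mconv A B) = mid"
    by (metis mconv_assoc mconv_mid_left)+
  then show ?thesis unfolding conv_invertible_def by blast
qed

lemma conv_invertible_imp_det_nonzero:
  fixes A :: "('d::finite, 's::finite) mseq"
  assumes "conv_invertible A"
  shows "det (A 0) \<noteq> 0"
proof -
  obtain B where "mconv A B = mid" using assms unfolding conv_invertible_def by blast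
  then have "A 0 ** B 0 = mat 1" by (metis mconv_0 mid_def)
  then have "det (A 0) * det (B 0) = 1" by (metis det_I det_mul)
  then show ?thesis by auto
qed

section \<open>Elementary row operations as left convolutions\<close>

definition swap_rows :: "'s::finite \<Rightarrow> 's \<Rightarrow> ('d::finite, 's) mseq \<Rightarrow> ('d, 's) mseq" where
  "swap_rows i j X = (\<lambda>k. \<chi> r. X k $ Transposition.transpose i j r)"

definition scale_row :: "'s::finite \<Rightarrow> 'd::finite rseq \<Rightarrow> ('d, 's) mseq \<Rightarrow> ('d, 's) mseq" where
  "scale_row i a X = (\<lambda>k. \<chi> r. if r = i then row_conv a X i k else X k $ r)"

definition add_row :: "'s::finite \<Rightarrow> 's \<Rightarrow> 'd::finite rseq \<Rightarrow> ('d, 's) mseq \<Rightarrow> ('d, 's) mseq" where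
  "add_row i j a X = (\<lambda>k. \<chi> r. if r = j then X k $ j + row_conv a X i k else X k $ r)"

lemma elem_row_op_iff:
  "elem_row_op X Y \<longleftrightarrow>
     (\<exists>i j. i \<noteq> j \<and> Y = swap_rows i j X)
   \<or> (\<exists>i a. sconv_invertible a \<and> Y = scale_row i a X)
   \<or> (\<exists>i j a. i \<noteq> j \<and> sconv_invertible a \<and> Y = add_row i j a X)"
proof -
  have "swap_rows i j X = (\<lambda>k. \<chi> r. if r = i then X k $ j else if r = j then X k $ i else X k $ r)" for i j
    by (auto simp: swap_rows_def Transposition.transpose_def fun_eq_iff vec_eq_iff)
  then show ?thesis
    unfolding elem_row_op_def scale_row_def add_row_def by presburger
qed

lemma row_conv_0: "row_conv a X i 0 = a 0 *s X 0 $ i"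
  unfolding row_conv_antidiag antidiag_0 by (simp add: vec_eq_iff)

lemma row_conv_cong: "(\<And>k. X k $ i = Y k $ j) \<Longrightarrow> row_conv a X i = row_conv a Y j"
  by (rule ext) (simp add: row_conv_antidiag)

lemma row_conv_nth: "row_conv a X i k $ t = sconv a (\<lambda>l. X l $ i $ t) k"
  by (simp add: row_conv_antidiag sconv_antidiag)

lemma row_conv_sid: "row_conv sid X i k = X k $ i"
  by (simp add: vec_eq_iff row_conv_nth)

lemma row_conv_add: "row_conv (\<lambda>k. a k + b k) X i k = row_conv a X i k + row_conv b X i k"
  by (simp add: row_conv_antidiag vec_eq_iff distrib_right sum.distrib case_prod_beta)

lemma row_conv_row_conv:
  assumes "\<And>k. Y k $ j = row_conv a X i k"
  shows "row_conv b Y j = row_conv (sconv b a) X i"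
proof (rule ext)
  fix k
  have "row_conv b Y j k $ c = row_conv (sconv b a) X i k $ c" for c
  proof -
    have "row_conv b Y j k $ c = (\<Sum>(l, l')\<in>antidiag k. \<Sum>(m, m')\<in>antidiag l'. b l * a m * X m' $ i $ c)"
      by (simp add: row_conv_antidiag assms sum_distrib_left mult.assoc case_prod_beta)
    also have "\<dots> = (\<Sum>(l, l')\<in>antidiag k. \<Sum>(m, m')\<in>antidiag l. b m * a m' * X l' $ i $ c)"
      by (rule sum_antidiag_assoc[symmetric])
    also have "\<dots> = row_conv (sconv b a) X i k $ c"
      by (simp add: row_conv_antidiag sconv_antidiag sum_distrib_right case_prod_beta)
    finally show ?thesis .
  qed
  then show "row_conv b Y j k = row_conv (sconv b a) X i k" by (simp add: vec_eq_iff)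
qed

lemma mconv_row: "mconv E X k $ r = (\<Sum>(l, l')\<in>antidiag k. E l $ r v* X l')"
  by (simp add: mconv_antidiag vec_eq_iff matrix_matrix_mult_def vector_matrix_mult_def case_prod_beta)

lemma sum_antidiag_mid_row:
  fixes X :: "('d::finite, 's::finite) mseq"
  shows "(\<Sum>(l, l')\<in>antidiag k. mid l $ s v* X l') = X k $ s"
  using mconv_row[of mid X k s] by simp

lemma mat_1_row_vector_matrix_mult: "(mat 1 $ i) v* (M :: 'a::comm_semiring_1^'n::finite^'m::finite) = M $ i"
  by (simp add: vector_matrix_mult_def mat_def vec_eq_iff of_bool_def[symmetric])

lemma sum_antidiag_row_conv_mid:
  fixes X :: "('d::finite, 's::finite) mseq"
  shows "(\<Sum>(l, l')\<in>antidiag k. row_conv a mid i l v* X l') = row_conv a X i k"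
proof -
  have "row_conv a mid i l = a l *s (mat 1 $ i)" for l
  proof (subst vec_eq_iff, intro allI)
    fix t
    have "row_conv a mid i l $ t = (\<Sum>(m, m')\<in>antidiag l. if m = 0 then a m' * (mat 1 $ i $ t) else 0)"
      unfolding row_conv_antidiag by (simp, subst sum_antidiag_swap, rule sum.cong) (auto simp: mid_def)
    also have "\<dots> = (a l *s (mat 1 $ i)) $ t" by (simp add: sum_antidiag_unit_left)
    finally show "row_conv a mid i l $ t = (a l *s (mat 1 $ i)) $ t" .
  qed
  moreover have "(a l *s (mat 1 $ i)) v* M = a l *s (M $ i)" for l and M :: "real^'s^'s"
    by (simp add: scalar_vector_matrix_assoc mat_1_row_vector_matrix_mult)
  ultimately have "(\<Sum>(l, l')\<in>antidiag k. row_conv a mid i l v* X l') = (\<Sum>(l, l')\<in>antidiag k. a l *s X l' $ i)"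
    by simp
  also have "\<dots> = row_conv a X i k"
    by (simp add: row_conv_antidiag vec_eq_iff sum_component case_prod_beta)
  finally show ?thesis .
qed

lemma mconv_swap_rows_mid: "mconv (swap_rows i j mid) X = swap_rows i j X"
proof (rule ext)
  fix k
  have "mconv (swap_rows i j mid) X k $ r = swap_rows i j X k $ r" for r
    by (simp add: mconv_row swap_rows_def sum_antidiag_mid_row)
  then show "mconv (swap_rows i j mid) X k = swap_rows i j X k" by (simp add: vec_eq_iff)
qed

lemma mconv_scale_row_mid: "mconv (scale_row i a mid) X = scale_row i a X"
proof (rule ext)
  fix k
  have "mconv (scale_row i a mid) X k $ r = scale_row i a X k $ r" for r
    by (cases "r = i") (simp_all add: mconv_row scale_row_def sum_antidiag_mid_row sum_antidiag_row_conv_mid)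
  then show "mconv (scale_row i a mid) X k = scale_row i a X k" by (simp add: vec_eq_iff)
qed

lemma mconv_add_row_mid: "mconv (add_row i j a mid) X = add_row i j a X"
proof (rule ext)
  fix k
  have "(\<Sum>(l, l')\<in>antidiag k. (mid l $ j + row_conv a mid i l) v* X l')
      = (\<Sum>(l, l')\<in>antidiag k. mid l $ j v* X l') + (\<Sum>(l, l')\<in>antidiag k. row_conv a mid i l v* X l')"
    by (simp add: vector_matrix_left_distrib sum.distrib split_def)
  then have "mconv (add_row i j a mid) X k $ r = add_row i j a X k $ r" for r
    by (cases "r = j") (simp_all add: mconv_row add_row_def sum_antidiag_mid_row sum_antidiag_row_conv_mid)
  then show "mconv (add_row i j a mid) X k = add_row i j a X k" by (simp add: vec_eq_iff)
qed

lemma swap_rows_swap_rows: "swap_rows i j (swap_rows i j X) = X"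
  by (simp add: swap_rows_def)

lemma scale_row_scale_row: "scale_row i b (scale_row i a X) = scale_row i (sconv b a) X"
proof -
  have "row_conv b (scale_row i a X) i = row_conv (sconv b a) X i"
    by (rule row_conv_row_conv) (simp add: scale_row_def)
  then show ?thesis
    by (simp add: scale_row_def[of i b] scale_row_def[of i "sconv b a"])
       (simp add: scale_row_def fun_eq_iff vec_eq_iff)
qed

lemma scale_row_sid: "scale_row i sid X = X"
  by (rule ext) (simp add: scale_row_def row_conv_sid vec_eq_iff)

lemma add_row_add_row:
  assumes "i \<noteq> j"
  shows "add_row i j b (add_row i j a X) = add_row i j (\<lambda>k. a k + b k) X"
proof -
  have "row_conv b (add_row i j a X) i = row_conv b X i"
    by (rule row_conv_cong) (simp add: add_row_def assms)
  then show ?thesis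
    by (simp add: add_row_def[of i j b] fun_eq_iff vec_eq_iff row_conv_add)
       (simp add: add_row_def row_conv_add)
qed

lemma add_row_zero: "add_row i j (\<lambda>k. 0) X = X"
  by (rule ext) (simp add: add_row_def row_conv_antidiag vec_eq_iff)

lemma elem_row_op_sym:
  assumes "elem_row_op X Y"
  shows "elem_row_op Y X"
  using assms unfolding elem_row_op_iff[of X Y]
proof (elim disjE exE conjE)
  fix i j assume "i \<noteq> j" "Y = swap_rows i j X"
  then show ?thesis unfolding elem_row_op_iff by (metis swap_rows_swap_rows)
next
  fix i a assume "sconv_invertible a" "Y = scale_row i a X"
  moreover obtain b where "sconv b a = sid"
    using \<open>sconv_invertible a\<close> unfolding sconv_invertible_def by blast
  ultimately show ?thesis unfolding elem_row_op_iff
    by (metis scale_row_scale_row scale_row_sid sconv_eq_sid_imp_invertible)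
next
  fix i j a assume "i \<noteq> j" "sconv_invertible a" "Y = add_row i j a X"
  moreover have "sconv_invertible (\<lambda>k. - a k)"
    using \<open>sconv_invertible a\<close> by (simp add: sconv_invertible_iff)
  moreover have "add_row i j (\<lambda>k. - a k) Y = X"
    using \<open>i \<noteq> j\<close> \<open>Y = add_row i j a X\<close> by (simp add: add_row_add_row add_row_zero)
  ultimately show ?thesis unfolding elem_row_op_iff by metis
qed

lemma elem_row_op_iff_mconv: "elem_row_op X Y \<longleftrightarrow> (\<exists>E. elementary_mseq E \<and> Y = mconv E X)"
proof
  assume "elem_row_op X Y"
  then show "\<exists>E. elementary_mseq E \<and> Y = mconv E X"
    unfolding elem_row_op_iff[of X Y]
  proof (elim disjE exE conjE)
    fix i j assume "i \<noteq> j" "Y = swap_rows i j X"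
    then show ?thesis
      by (metis elementary_mseq_def elem_row_op_iff mconv_swap_rows_mid)
  next
    fix i a assume "sconv_invertible a" "Y = scale_row i a X"
    then show ?thesis
      by (metis elementary_mseq_def elem_row_op_iff mconv_scale_row_mid)
  next
    fix i j a assume "i \<noteq> j" "sconv_invertible a" "Y = add_row i j a X"
    then show ?thesis
      by (metis elementary_mseq_def elem_row_op_iff mconv_add_row_mid)
  qed
next
  assume "\<exists>E. elementary_mseq E \<and> Y = mconv E X"
  then obtain E where "elem_row_op mid E" "Y = mconv E X"
    unfolding elementary_mseq_def by blast
  then show "elem_row_op X Y"
    unfolding elem_row_op_iff
    by (elim disjE exE conjE; simp add: mconv_swap_rows_mid mconv_scale_row_mid mconv_add_row_mid; blast)
qed

lemma conv_invertible_elementary: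
  assumes "elementary_mseq E"
  shows "conv_invertible E"
proof -
  have "\<exists>E'. elementary_mseq E' \<and> mconv E' F = mid" if "elementary_mseq F" for F
    using that elem_row_op_sym elem_row_op_iff_mconv unfolding elementary_mseq_def by metis
  then obtain E' E'' where "elementary_mseq E'" "mconv E' E = mid" "mconv E'' E' = mid"
    using assms by metis
  moreover from this have "E'' = E"
    by (metis mconv_assoc mconv_mid_left mconv_mid_right)
  ultimately show ?thesis
    unfolding conv_invertible_def by blast
qed

lemma conv_invertible_foldr_mconv:
  "(\<And>E. E \<in> set Es \<Longrightarrow> conv_invertible E) \<Longrightarrow> conv_invertible (foldr mconv Es mid)"
  by (induction Es) (simp_all add: conv_invertible_mid conv_invertible_mconv)

lemma rtranclp_elem_row_op_mid_iff:
  "elem_row_op\<^sup>*\<^sup>* mid A \<longleftrightarrow> (\<exists>Es. (\<forall>E \<in> set Es. elementary_mseq E) \<and> A = foldr mconv Es mid)"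
proof
  assume "elem_row_op\<^sup>*\<^sup>* mid A"
  then show "\<exists>Es. (\<forall>E \<in> set Es. elementary_mseq E) \<and> A = foldr mconv Es mid"
  proof (induction rule: rtranclp_induct)
    case base
    have "mid = foldr mconv [] mid" by simp
    then show ?case by (metis empty_iff list.set(1))
  next
    case (step Y Z)
    then obtain E Es where "elementary_mseq E" "Z = mconv E Y"
        "\<forall>E \<in> set Es. elementary_mseq E" "Y = foldr mconv Es mid"
      using elem_row_op_iff_mconv by blast
    then have "(\<forall>E' \<in> set (E # Es). elementary_mseq E') \<and> Z = foldr mconv (E # Es) mid" by simp
    then show ?case by blast
  qed
next
  assume "\<exists>Es. (\<forall>E \<in> set Es. elementary_mseq E) \<and> A = foldr mconv Es mid"
  then obtain Es where "\<forall>E \<in> set Es. elementary_mseq E" "A = foldr mconv Es mid" by blast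
  then show "elem_row_op\<^sup>*\<^sup>* mid A"
  proof (induction Es arbitrary: A)
    case (Cons E Es)
    then have "elem_row_op (foldr mconv Es mid) A"
      using elem_row_op_iff_mconv by auto
    then show ?case using Cons by (meson rtranclp.rtrancl_into_rtrancl list.set_intros(2))
  qed simp
qed

lemma row_equivalent_mid_iff: "row_equivalent A mid \<longleftrightarrow> elem_row_op\<^sup>*\<^sup>* mid A"
proof -
  have "symp elem_row_op\<^sup>*\<^sup>*"
    by (rule symp_rtranclp) (auto intro: sympI elem_row_op_sym)
  then show ?thesis
    unfolding row_equivalent_def by (auto dest: sympD)
qed

section \<open>Gauss-Jordan elimination\<close>

lemma elem_row_op_swap_rows: "i \<noteq> j \<Longrightarrow> elem_row_op X (swap_rows i j X)"
  unfolding elem_row_op_iff by blast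

lemma elem_row_op_scale_row: "a 0 \<noteq> 0 \<Longrightarrow> elem_row_op X (scale_row i a X)"
  unfolding elem_row_op_iff sconv_invertible_iff by blast

lemma elem_row_op_add_row: "i \<noteq> j \<Longrightarrow> a 0 \<noteq> 0 \<Longrightarrow> elem_row_op X (add_row i j a X)"
  unfolding elem_row_op_iff sconv_invertible_iff by blast

text \<open>Adding \<open>c\<close> times a row is an elementary operation only if \<open>c 0 \<noteq> 0\<close>; otherwise
  add \<open>c + 1\<close> times the row and then subtract it once.\<close>

lemma rtranclp_elem_row_op_add_row:
  assumes "i \<noteq> j"
  shows "elem_row_op\<^sup>*\<^sup>* X (add_row i j c X)"
proof (cases "c 0 = 0")
  case False
  then show ?thesis using elem_row_op_add_row[OF assms] by blast
next
  case True
  define Y where "Y = add_row i j (\<lambda>k. c k + 1) X"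
  have "elem_row_op X Y"
    unfolding Y_def using True by (intro elem_row_op_add_row assms) simp
  moreover have "elem_row_op Y (add_row i j (\<lambda>k. - 1) Y)"
    by (intro elem_row_op_add_row assms) simp
  moreover have "add_row i j (\<lambda>k. - 1) Y = add_row i j c X"
    unfolding Y_def by (simp add: add_row_add_row assms)
  ultimately show ?thesis by (metis r_into_rtranclp rtranclp.rtrancl_into_rtrancl)
qed

definition identity_cols :: "'s set \<Rightarrow> ('d::finite, 's::finite) mseq \<Rightarrow> bool" where
  "identity_cols S X \<longleftrightarrow> (\<forall>t\<in>S. \<forall>k r. X k $ r $ t = mid k $ r $ t)"

lemma mid_entry: "mid k $ r $ t = (if k = 0 \<and> r = t then 1 else 0)"
  by (simp add: mid_def mat_def)

lemma identity_cols_UNIV_imp_mid: "identity_cols UNIV X \<Longrightarrow> X = mid"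
  by (simp add: identity_cols_def fun_eq_iff vec_eq_iff)

lemma row_conv_identity_col:
  assumes "identity_cols S X" "i \<notin> S" "t \<in> S"
  shows "row_conv a X i k $ t = 0"
proof -
  have "i \<noteq> t" using assms(2,3) by blast
  then show ?thesis
    using assms(1,3) by (simp add: row_conv_antidiag identity_cols_def mid_entry)
qed

lemma identity_cols_swap_rows:
  "identity_cols S X \<Longrightarrow> i \<notin> S \<Longrightarrow> j \<notin> S \<Longrightarrow> identity_cols S (swap_rows i j X)"
  unfolding identity_cols_def swap_rows_def Transposition.transpose_def by (auto simp: mid_entry)

lemma identity_cols_scale_row:
  assumes "identity_cols S X" "i \<notin> S"
  shows "identity_cols S (scale_row i a X)"
  using assms row_conv_identity_col[OF assms] unfolding identity_cols_def scale_row_def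
  by (auto simp: mid_entry)
lemma identity_cols_add_row:
  assumes "identity_cols S X" "i \<notin> S"
  shows "identity_cols S (add_row i j a X)"
  using assms row_conv_identity_col[OF assms] unfolding identity_cols_def add_row_def
  by (auto simp: mid_entry)
lemma det_swap_rows_0:
  assumes "i \<noteq> j"
  shows "det (swap_rows i j X 0) = - det (X 0)"
proof -
  have "Transposition.transpose i j permutes UNIV"
    by (rule permutes_swap_id) auto
  then show ?thesis
    using det_permute_rows[of "Transposition.transpose i j" "X 0"] assms
    by (simp add: swap_rows_def sign_swap_id)
qed

lemma det_scale_row_0: "det (scale_row i a X 0) = a 0 * det (X 0)"
proof -
  have "scale_row i a X 0 = (\<chi> r. if r = i then a 0 *s X 0 $ r else X 0 $ r)"
    by (simp add: scale_row_def row_conv_0 vec_eq_iff)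
  then show ?thesis using det_row_mul[of i "a 0" "\<lambda>r. X 0 $ r" "\<lambda>r. X 0 $ r"] by simp
qed

lemma det_add_row_0:
  assumes "i \<noteq> j"
  shows "det (add_row i j a X 0) = det (X 0)"
proof -
  have "add_row i j a X 0 = (\<chi> r. if r = j then row j (X 0) + a 0 *s row i (X 0) else row r (X 0))"
    by (simp add: add_row_def row_conv_0 vec_eq_iff row_def)
  then show ?thesis using det_row_operation[of j i "X 0" "a 0"] assms by simp
qed

lemma exists_pivot:
  fixes X :: "('d::finite, 's::finite) mseq"
  assumes det: "det (X 0) \<noteq> 0" and S: "identity_cols S X" and "j \<notin> S"
  obtains i where "i \<notin> S" "X 0 $ i $ j \<noteq> 0"
proof (rule ccontr)
  assume "\<not> thesis"
  with that have zero: "X 0 $ i $ j = 0" if "i \<notin> S" for i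
    using that by blast
  \<comment> \<open>Otherwise column \<open>j\<close> of \<open>X 0\<close> is a combination of its unit columns in \<open>S\<close>.\<close>
  define x :: "real^'s" where "x = (\<chi> t. if t = j then 1 else if t \<in> S then - X 0 $ t $ j else 0)"
  have "(X 0 *v x) $ r = 0" for r
  proof -
    have col: "X 0 $ r $ t = (if r = t then 1 else 0)" if "t \<in> S" for t
      using S that by (simp add: identity_cols_def mid_entry)
    have "X 0 $ r $ t * x $ t = (if t = j then X 0 $ r $ j else 0) + (if t = r \<and> r \<in> S then - X 0 $ r $ j else 0)" for t
      using \<open>j \<notin> S\<close> col by (auto simp: x_def)
    then have "(X 0 *v x) $ r = X 0 $ r $ j + (if r \<in> S then - X 0 $ r $ j else 0)"
      by (simp add: matrix_vector_mult_def sum.distrib)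
    then show ?thesis using zero by auto
  qed
  then have "X 0 *v x = 0" by (simp add: vec_eq_iff)
  moreover have "x \<noteq> 0" by (auto simp: x_def vec_eq_iff)
  ultimately show False
    using det matrix_left_invertible_ker invertible_det_nz invertible_left_inverse by metis
qed

lemma clear_column:
  assumes "j \<notin> S" "identity_cols S X" "\<forall>k. X k $ j $ j = sid k" "det (X 0) \<noteq> 0"
  obtains Y where "elem_row_op\<^sup>*\<^sup>* X Y" "identity_cols (insert j S) Y" "det (Y 0) \<noteq> 0"
proof -
  have "\<exists>Y. elem_row_op\<^sup>*\<^sup>* X Y \<and> identity_cols (insert j S) Y \<and> det (Y 0) \<noteq> 0"
    if "finite R" "identity_cols S X" "\<forall>k. X k $ j $ j = sid k" "det (X 0) \<noteq> 0"
      "\<And>k t. t \<noteq> j \<Longrightarrow> t \<notin> R \<Longrightarrow> X k $ t $ j = 0" for R X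
    \<comment> \<open>\<open>R\<close> contains the rows still to be cleared in column \<open>j\<close>\<close>
    using that
  proof (induction R arbitrary: X rule: finite_induct)
    case empty
    have "X k $ r $ j = mid k $ r $ j" for k r
      using empty.prems(2,4) by (cases "r = j") (auto simp: mid_entry sid_def)
    then have "identity_cols (insert j S) X"
      using empty.prems(1) by (simp add: identity_cols_def)
    with empty show ?case by blast
  next
    case (insert r R)
    show ?case
    proof (cases "r = j")
      case True
      show ?thesis
        by (rule insert.IH[OF insert.prems(1-3)]) (use insert.prems(4) True in auto)
    next
      case False
      define Y where "Y = add_row j r (\<lambda>k. - X k $ r $ j) X"
      have "Y k $ r $ j = 0" for k
        using insert.prems(2) by (simp add: Y_def add_row_def row_conv_nth)
      moreover have "Y k $ t = X k $ t" if "t \<noteq> r" for k t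
        using that by (simp add: Y_def add_row_def)
      ultimately have "Y k $ t $ j = 0" if "t \<noteq> j" "t \<notin> R" for k t
        using that insert.prems(4) by (cases "t = r") auto
      moreover have "identity_cols S Y" "\<forall>k. Y k $ j $ j = sid k" "det (Y 0) \<noteq> 0"
        using insert.prems False \<open>j \<notin> S\<close>
        by (simp_all add: Y_def identity_cols_add_row det_add_row_0) (simp add: add_row_def)
      ultimately obtain Z where "elem_row_op\<^sup>*\<^sup>* Y Z" "identity_cols (insert j S) Z" "det (Z 0) \<noteq> 0"
        using insert.IH by blast
      moreover have "elem_row_op\<^sup>*\<^sup>* X Y"
        unfolding Y_def using False by (simp add: rtranclp_elem_row_op_add_row)
      ultimately show ?thesis by (meson rtranclp_trans)
    qed
  qed
  from this[of UNIV X] assms obtain Y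
    where "elem_row_op\<^sup>*\<^sup>* X Y" "identity_cols (insert j S) Y" "det (Y 0) \<noteq> 0"
    by auto
  then show ?thesis by (rule that)
qed

lemma extend_identity_cols:
  assumes "identity_cols S X" "det (X 0) \<noteq> 0" "j \<notin> S"
  obtains Y where "elem_row_op\<^sup>*\<^sup>* X Y" "identity_cols (insert j S) Y" "det (Y 0) \<noteq> 0"
proof -
  obtain i where i: "i \<notin> S" "X 0 $ i $ j \<noteq> 0"
    using exists_pivot assms by blast
  define X1 where "X1 = (if i = j then X else swap_rows i j X)"
  have "elem_row_op\<^sup>*\<^sup>* X X1"
    by (simp add: X1_def elem_row_op_swap_rows r_into_rtranclp)
  have "identity_cols S X1" "det (X1 0) \<noteq> 0"
    using assms i by (simp_all add: X1_def identity_cols_swap_rows det_swap_rows_0)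
  have "X1 0 $ j $ j \<noteq> 0"
    using i by (cases "i = j") (simp_all add: X1_def swap_rows_def)
  define p where "p = (\<lambda>k. X1 k $ j $ j)"
  have "sconv (sinv p) p = sid"
    using \<open>X1 0 $ j $ j \<noteq> 0\<close> by (simp add: p_def sconv_sinv sconv_commute)
  then have "sinv p 0 \<noteq> 0"
    using sconv_eq_sid_imp_invertible sconv_invertible_iff by blast
  define X2 where "X2 = scale_row j (sinv p) X1"
  have "elem_row_op X1 X2" "identity_cols S X2" "det (X2 0) \<noteq> 0"
    using \<open>sinv p 0 \<noteq> 0\<close> \<open>j \<notin> S\<close> \<open>identity_cols S X1\<close> \<open>det (X1 0) \<noteq> 0\<close>
    by (simp_all add: X2_def elem_row_op_scale_row identity_cols_scale_row det_scale_row_0)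
  moreover have "\<forall>k. X2 k $ j $ j = sid k"
    using \<open>sconv (sinv p) p = sid\<close> by (simp add: X2_def scale_row_def row_conv_nth flip: p_def)
  ultimately obtain Y where "elem_row_op\<^sup>*\<^sup>* X2 Y" "identity_cols (insert j S) Y" "det (Y 0) \<noteq> 0"
    using clear_column \<open>j \<notin> S\<close> by metis
  moreover have "elem_row_op\<^sup>*\<^sup>* X X2"
    using \<open>elem_row_op\<^sup>*\<^sup>* X X1\<close> \<open>elem_row_op X1 X2\<close> by (meson rtranclp.rtrancl_into_rtrancl)
  ultimately show ?thesis
    using that rtranclp_trans by metis
qed

lemma det_nonzero_imp_rtranclp_elem_row_op_mid:
  assumes "det (A 0) \<noteq> 0"
  shows "elem_row_op\<^sup>*\<^sup>* A mid"
proof -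
  have "elem_row_op\<^sup>*\<^sup>* X mid" if "finite T" "identity_cols (- T) X" "det (X 0) \<noteq> 0" for T X
    using that
  proof (induction T arbitrary: X rule: finite_induct)
    case empty
    then have "X = mid" by (simp add: identity_cols_UNIV_imp_mid)
    then show ?case by simp
  next
    case (insert j T)
    have "j \<notin> - insert j T" by simp
    with insert.prems obtain Y
      where "elem_row_op\<^sup>*\<^sup>* X Y" "identity_cols (insert j (- insert j T)) Y" "det (Y 0) \<noteq> 0"
      by (rule extend_identity_cols)
    moreover have "insert j (- insert j T) = - T"
      using insert.hyps(2) by blast
    ultimately show ?case
      using insert.IH rtranclp_trans by metis
  qed
  from this[of UNIV A] show ?thesis
    using assms by (simp add: identity_cols_def)
qed

theorem proposition4:
  fixes A :: "nat^'d::finite \<Rightarrow> real^'s::finite^'s"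
  shows "(conv_invertible A \<longleftrightarrow> row_equivalent A mid)
       \<and> (row_equivalent A mid \<longleftrightarrow>
            (\<exists>Es. (\<forall>E \<in> set Es. elementary_mseq E) \<and> A = foldr mconv Es mid))"
proof -
  have ii_iii: "row_equivalent A mid \<longleftrightarrow> (\<exists>Es. (\<forall>E \<in> set Es. elementary_mseq E) \<and> A = foldr mconv Es mid)"
    by (simp add: row_equivalent_mid_iff rtranclp_elem_row_op_mid_iff)
  have "conv_invertible A \<Longrightarrow> row_equivalent A mid"
    unfolding row_equivalent_def
    by (blast dest: conv_invertible_imp_det_nonzero det_nonzero_imp_rtranclp_elem_row_op_mid)
  moreover have "row_equivalent A mid \<Longrightarrow> conv_invertible A"
    unfolding ii_iii by (auto intro: conv_invertible_foldr_mconv conv_invertible_elementary)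
  ultimately show ?thesis
    using ii_iii by blast
qed

end
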